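(* Let $\Sigma$ be a system as in the context and let $R\in\mathbb R^{r\times n}$ be such that $\mathcal R_{\mathrm{bis}}=\ker([R\ \ -R])\subseteq\mathbb R^n\times\mathbb R^n$ is total. Then $\mathcal R_{\mathrm{bis}}$ is a stochastic bisimulation relation between $\Sigma$ and itself if and only if $A\ker(R)\subseteq\ker(R)\subseteq\ker(C)$ and $\ker(R)\cap\mathrm{im}(\mathcal{R}each(A,G))=\{0\}$.
   Context: $\Sigma$: $x(t+1)=Ax(t)+Bu(t)+Gw(t)$, $y(t)=Cx(t)+\nu(t)$, $t\in\mathbb N$, $x\in\mathbb R^n$, $u\in\mathbb R^m$, $w\in\mathbb R^l$, $y,\nu\in\mathbb R^p$, where $(w(t))_t$ is i.i.d. $\mathcal N(\mu,I_l)$, $(\nu(t))_t$ is i.i.d. $\mathcal N(0,\Psi)$, mutually independent. For a deterministic initial state $x^0$ and deterministic input $\mathbf u:\mathbb N\to\mathbb R^m$, $\mathbf x|_{x^0,\mathbf u}(t)=A^tx^0+\sum_{\tau=0}^{t-1}A^{t-1-\tau}(Bu(\tau)+Gw(\tau))$, $\mathbf y|_{x^0,\mathbf u}(t)=C\mathbf x|_{x^0,\mathbf u}(t)+\nu(t)$ (for two different initial states the processes are driven by independent copies of the noises); $\mathbf P(\cdot\mid x^0)$ is probability for the process started at $x^0$. Processes are stochastically equivalent ($\sim$) if all finite-dimensional joint distributions coincide. $\mathrm{supp}(v)=\{z:\mathbf P(v\in B_\rho(z))>0\ \forall\rho>0\}$. For a relation $\mathcal R\subseteq\mathbb R^n\times\mathbb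 R^n$: $\mathcal R(X_1)=\{x_2:\exists x_1\in X_1,(x_1,x_2)\in\mathcal R\}$, $\mathcal R^{-1}(X_2)=\{x_1:\exists x_2\in X_2,(x_1,x_2)\in\mathcal R\}$; total means $\mathcal R(\mathbb R^{n})=\mathbb R^{n}$ and $\mathcal R^{-1}(\mathbb R^{n})=\mathbb R^{n}$. A subspace $\mathcal R$ is a stochastic bisimulation relation between $\Sigma$ and itself if for every $(x_1^0,x_2^0)\in\mathcal R$, every input $\mathbf u$ and every $t\in\mathbb N$: (i) for every measurable $X_1\subseteq\mathcal R^{-1}(\mathbb R^{n})$, $\mathbf P(\mathbf x|_{x_1^0,\mathbf u}(t)\in X_1\mid x_1^0)=\mathbf P(\mathbf x|_{x_2^0,\mathbf u}(t)\in\mathcal R(X_1\cap\mathrm{supp}(\mathbf x|_{x_1^0,\mathbf u}(t)))\mid x_2^0)$; (ii) for every measurable $X_2\subseteq\mathcal R(\mathbb R^{n})$, $\mathbf P(\mathbf x|_{x_2^0,\mathbf u}(t)\in X_2\mid x_2^0)=\mathbf P(\mathbf x|_{x_1^0,\mathbf u}(t)\in\mathcal R^{-1}(X_2\cap\mathrm{supp}(\mathbf x|_{x_2^0,\mathbf u}(t)))\mid x_1^0)$; (iii) $\mathbf y|_{x_1^0,\mathbf u}\sim\mathbf y|_{x_2^0,\mathbf u}$. $\mathcal{R}each(A,G)=[G\ AG\ \cdots\ A^{n-1}G]$. *)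

theory Defs
  imports "HOL-Analysis.Analysis" "HOL-Probability.Probability"
begin

fun mat_pow :: "real^'n^'n \<Rightarrow> nat \<Rightarrow> real^'n^'n" where
  "mat_pow A 0 = mat 1"
| "mat_pow A (Suc k) = A ** mat_pow A k"

text \<open>Underlying probability space: an i.i.d. family of standard normal reals indexed by
  (time, component).  Component Inl i (i :: 'l) drives w(t), component Inr j (j :: 'p)
  drives the measurement noise.\<close>
definition noise_space :: "(nat \<times> ('l + 'p) \<Rightarrow> real) measure" where
  "noise_space = PiM UNIV (\<lambda>_. density lborel std_normal_density)"

text \<open>w(t) = mu + standard normal vector, hence i.i.d. N(mu, I_l).\<close>
definition proc_w :: "real^'l \<Rightarrow> nat \<Rightarrow> (nat \<times> ('l + 'p) \<Rightarrow> real) \<Rightarrow> real^'l" where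
  "proc_w mu t \<omega> = mu + (\<chi> i. \<omega> (t, Inl i))"

text \<open>nu(t) = L z(t) with z(t) standard normal, hence i.i.d. N(0, L L^T).\<close>
definition proc_nu :: "real^'p^'p \<Rightarrow> nat \<Rightarrow> (nat \<times> ('l + 'p) \<Rightarrow> real) \<Rightarrow> real^'p" where
  "proc_nu L t \<omega> = L *v (\<chi> j. \<omega> (t, Inr j))"

definition proc_x :: "real^'n^'n \<Rightarrow> real^'m^'n \<Rightarrow> real^'l^'n \<Rightarrow> real^'l \<Rightarrow>
    real^'n \<Rightarrow> (nat \<Rightarrow> real^'m) \<Rightarrow> nat \<Rightarrow> (nat \<times> ('l + 'p) \<Rightarrow> real) \<Rightarrow> real^'n" where
  "proc_x A B G mu x0 u t \<omega> = mat_pow A t *v x0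
     + (\<Sum>\<tau><t. mat_pow A (t - 1 - \<tau>) *v (B *v u \<tau> + G *v proc_w mu \<tau> \<omega>))"

definition proc_y :: "real^'n^'n \<Rightarrow> real^'m^'n \<Rightarrow> real^'l^'n \<Rightarrow> real^'n^'p \<Rightarrow> real^'l \<Rightarrow>
    real^'p^'p \<Rightarrow> real^'n \<Rightarrow> (nat \<Rightarrow> real^'m) \<Rightarrow> nat \<Rightarrow> (nat \<times> ('l + 'p) \<Rightarrow> real) \<Rightarrow> real^'p" where
  "proc_y A B G C mu L x0 u t \<omega> = C *v proc_x A B G mu x0 u t \<omega> + proc_nu L t \<omega>"

definition rv_supp :: "'a measure \<Rightarrow> ('a \<Rightarrow> 'b::metric_space) \<Rightarrow> 'b set" where
  "rv_supp M v = {z. \<forall>\<rho>>0. measure M {\<omega> \<in> space M. v \<omega> \<in> ball z \<rho>} > 0}"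

definition stoch_equiv :: "'a measure \<Rightarrow> (nat \<Rightarrow> 'a \<Rightarrow> 'b::topological_space) \<Rightarrow>
    (nat \<Rightarrow> 'a \<Rightarrow> 'b) \<Rightarrow> bool" where
  "stoch_equiv M y1 y2 \<longleftrightarrow> (\<forall>T. finite T \<longrightarrow>
     distr M (PiM T (\<lambda>_. borel)) (\<lambda>\<omega>. \<lambda>t\<in>T. y1 t \<omega>)
   = distr M (PiM T (\<lambda>_. borel)) (\<lambda>\<omega>. \<lambda>t\<in>T. y2 t \<omega>))"

text \<open>Stochastic bisimulation relation between Sigma and itself
  (R `` X = R(X), converse R `` X = R^{-1}(X)).\<close>
definition stoch_bisim :: "real^'n^'n \<Rightarrow> real^'m^'n \<Rightarrow> real^'l^'n \<Rightarrow> real^'n^'p \<Rightarrow> real^'l \<Rightarrow>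
    real^'p^'p \<Rightarrow> ((real^'n) \<times> (real^'n)) set \<Rightarrow> bool" where
  "stoch_bisim A B G C mu L Rel \<longleftrightarrow> subspace Rel \<and>
    (\<forall>x1 x2 u t. (x1, x2) \<in> Rel \<longrightarrow>
      (let M = (noise_space :: (nat \<times> ('l + 'p) \<Rightarrow> real) measure);
           X1p = proc_x A B G mu x1 u t; X2p = proc_x A B G mu x2 u t in
       (\<forall>X1 \<in> sets borel. X1 \<subseteq> Domain Rel \<longrightarrow>
          measure M {\<omega> \<in> space M. X1p \<omega> \<in> X1}
        = measure M {\<omega> \<in> space M. X2p \<omega> \<in> Rel `` (X1 \<inter> rv_supp M X1p)})
     \<and> (\<forall>X2 \<in> sets borel. X2 \<subseteq> Range Rel \<longrightarrow>
          measure M {\<omega> \<in> space M. X2p \<omega> \<in> X2}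
        = measure M {\<omega> \<in> space M. X1p \<omega> \<in> converse Rel `` (X2 \<inter> rv_supp M X2p)})
     \<and> stoch_equiv M (proc_y A B G C mu L x1 u) (proc_y A B G C mu L x2 u)))"

definition ker_mat :: "real^'n^'r \<Rightarrow> (real^'n) set" where
  "ker_mat R = {x. R *v x = 0}"

text \<open>The relation ker([R  -R]) as a set of pairs.\<close>
definition rel_bis :: "real^'n^'r \<Rightarrow> ((real^'n) \<times> (real^'n)) set" where
  "rel_bis R = {(x1, x2). R *v x1 - R *v x2 = 0}"

text \<open>Image of Reach(A,G) = [G AG ... A^(n-1)G], n = CARD('n).\<close>
definition reach_im :: "real^'n^'n \<Rightarrow> real^'l^'n \<Rightarrow> (real^'n) set" where
  "reach_im A G = {(\<Sum>k<CARD('n). mat_pow A k *v (G *v v k)) | v. True}"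

end

theory Submission
  imports Defs
begin

text \<open>The state \<open>x(t)\<close> started at \<open>x\<^sup>0\<close> is its noiseless trajectory plus a Gaussian vector whose
  support is the reachable subspace \<open>V\<^sub>t = im [G AG \<dots> A\<^sup>t\<^sup>-\<^sup>1G]\<close>, so \<open>supp x(t)\<close> is the coset of
  \<open>V\<^sub>t\<close> through the noiseless state. If \<open>A ker R \<subseteq> ker R \<subseteq> ker C\<close> and \<open>ker R \<inter> V\<^sub>n = {0}\<close>,
  two related trajectories differ by \<open>A\<^sup>t (x\<^sub>1 - x\<^sub>2) \<in> ker R \<inter> ker C\<close> and \<open>R\<close> is injective on each
  coset, so the events compared in (i) and (ii) coincide and the outputs agree pathwise.
  Conversely, the means of \<open>y(0)\<close> give \<open>ker R \<subseteq> ker C\<close>; a nonzero \<open>k \<in> ker R \<inter> V\<^sub>n\<close> would force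
  the state into a hyperplane orthogonal to \<open>k\<close> almost surely; and a failure of \<open>A\<close>-invariance
  would make the law of a one-step state invariant under a nonzero translation.\<close>

section \<open>The noise space\<close>

lemma prob_space_noise_space: "prob_space noise_space"
  unfolding noise_space_def by (intro prob_space_PiM prob_space_normal_density) simp

lemma finite_measure_noise_space: "finite_measure noise_space"
  using prob_space_noise_space unfolding prob_space_def by blast

lemma space_noise_space: "space noise_space = UNIV"
  unfolding noise_space_def by (simp add: space_PiM)

lemma measurable_noise_component:
  "(\<lambda>\<omega>. \<omega> j) \<in> measurable noise_space (density lborel std_normal_density)"
  unfolding noise_space_def by (rule measurable_component_singleton) simp

lemma borel_measurable_noise_component: "(\<lambda>\<omega>. \<omega> j) \<in> borel_measurable noise_space"
proof -
  have sets_eq: "sets (density lborel std_normal_density) = sets (borel :: real measure)"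
    by simp
  show ?thesis
    using measurable_noise_component by (simp only: measurable_cong_sets[OF refl sets_eq])
qed

lemma borel_measurable_noise_vector:
  "(\<lambda>\<omega>. (\<chi> i. \<omega> (g i)) :: real^'k) \<in> borel_measurable noise_space"
proof -
  have "(\<lambda>\<omega>. (\<chi> i. \<omega> (g i)) :: real^'k) = (\<lambda>\<omega>. \<Sum>i\<in>UNIV. \<omega> (g i) *\<^sub>R axis i 1)"
    by (rule ext) (simp add: vec_eq_iff axis_def sum_component if_distrib cong: if_cong)
  moreover have "(\<lambda>\<omega>. \<Sum>i\<in>UNIV. \<omega> (g i) *\<^sub>R axis i (1::real)) \<in> borel_measurable noise_space"
    by (intro borel_measurable_sum borel_measurable_scaleR
        borel_measurable_noise_component borel_measurable_const)
  ultimately show ?thesis by simp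
qed

lemma borel_measurable_mult_vec:
  "f \<in> borel_measurable M \<Longrightarrow> (\<lambda>\<omega>. (A::real^'a^'b) *v f \<omega>) \<in> borel_measurable M"
  using measurable_compose[OF _ borel_measurable_continuous_onI[OF matrix_vector_mult_linear_continuous_on]]
  by blast

lemma borel_measurable_proc_x: "proc_x A B G mu x u t \<in> borel_measurable noise_space"
  unfolding proc_x_def[abs_def] proc_w_def
  by (intro borel_measurable_add borel_measurable_sum borel_measurable_mult_vec
      borel_measurable_const borel_measurable_noise_vector)

lemma borel_measurable_proc_y: "proc_y A B G C mu L x u t \<in> borel_measurable noise_space"
  unfolding proc_y_def[abs_def] proc_nu_def
  by (intro borel_measurable_add borel_measurable_mult_vec borel_measurable_proc_x
      borel_measurable_noise_vector)

lemma borel_mem_sets: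
  "f \<in> borel_measurable M \<Longrightarrow> S \<in> sets borel \<Longrightarrow> {\<omega> \<in> space M. f \<omega> \<in> S} \<in> sets M"
proof -
  assume "f \<in> borel_measurable M" and "S \<in> sets borel"
  moreover have "{\<omega> \<in> space M. f \<omega> \<in> S} = f -` S \<inter> space M"
    by auto
  ultimately show ?thesis
    by (simp add: measurable_sets)
qed

lemma integrable_noise_component: "integrable noise_space (\<lambda>\<omega>. \<omega> j)"
proof -
  let ?N = "density lborel std_normal_density"
  have "integrable lborel (\<lambda>x. std_normal_density x * x ^ 1)"
    by (rule integrable_std_normal_moment)
  then have "integrable ?N (\<lambda>x. x)"
    by (subst integrable_density) auto
  moreover have "distr noise_space ?N (\<lambda>\<omega>. \<omega> j) = ?N"
    unfolding noise_space_def
    by (rule distr_PiM_component) (auto intro: prob_space_normal_density)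
  moreover have "integrable (distr noise_space ?N (\<lambda>\<omega>. \<omega> j)) (\<lambda>x. x)
      \<longleftrightarrow> integrable noise_space (\<lambda>\<omega>. \<omega> j)"
    by (rule integrable_distr_eq[OF measurable_noise_component]) simp
  ultimately show ?thesis by simp
qed

lemma emeasure_std_normal_interval_pos:
  assumes "a < b"
  shows "0 < emeasure (density lborel std_normal_density) {a<..<b}"
proof -
  define c where "c = (1 / sqrt (2 * pi)) * exp (- (a\<^sup>2 + b\<^sup>2) / 2)"
  have "c > 0" unfolding c_def by simp
  have lower: "ennreal c * indicator {a<..<b} x \<le> ennreal (std_normal_density x) * indicator {a<..<b} x" for x
  proof (cases "x \<in> {a<..<b}")
    case True
    then have "x\<^sup>2 \<le> a\<^sup>2 + b\<^sup>2"
      by (auto simp: power2_eq_square)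
        (smt (verit) mult_mono mult_nonneg_nonneg mult_less_cancel_left mult_le_cancel_right)
    then have "c \<le> std_normal_density x"
      unfolding c_def std_normal_density_def by (intro mult_left_mono) auto
    then show ?thesis using True by (simp add: ennreal_leI)
  qed simp
  have "emeasure (density lborel std_normal_density) {a<..<b}
      = (\<integral>\<^sup>+ x. ennreal (std_normal_density x) * indicator {a<..<b} x \<partial>lborel)"
    by (rule emeasure_density) auto
  also have "\<dots> \<ge> (\<integral>\<^sup>+ x. ennreal c * indicator {a<..<b} x \<partial>lborel)"
    by (intro nn_integral_mono lower)
  finally have "ennreal c * emeasure lborel {a<..<b} \<le> emeasure (density lborel std_normal_density) {a<..<b}"
    by (simp add: nn_integral_cmult_indicator)
  moreover have "0 < ennreal c * emeasure lborel {a<..<b}"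
    using assms \<open>c > 0\<close> by (simp add: ennreal_mult''[symmetric])
  ultimately show ?thesis by order
qed

lemma measure_noise_cylinder_pos:
  assumes "finite J" and "\<delta> > 0"
  shows "0 < measure noise_space {\<omega>. \<forall>j\<in>J. \<bar>\<omega> j - c j\<bar> < \<delta>}"
proof -
  let ?N = "density lborel std_normal_density"
  interpret N: prob_space ?N by (rule prob_space_normal_density) simp
  define I where "I = (\<lambda>j. {c j - \<delta> <..< c j + \<delta>})"
  have cyl: "{\<omega>. \<forall>j\<in>J. \<bar>\<omega> j - c j\<bar> < \<delta>} = prod_emb UNIV (\<lambda>_. ?N) J (Pi\<^sub>E J I)"
    by (auto simp: prod_emb_def I_def PiE_iff abs_diff_less_iff)
  have "emeasure noise_space (prod_emb UNIV (\<lambda>_. ?N) J (Pi\<^sub>E J I)) = (\<Prod>j\<in>J. emeasure ?N (I j))"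
    unfolding noise_space_def
    by (rule emeasure_PiM_emb) (auto simp: assms I_def N.prob_space_axioms)
  also have "\<dots> = ennreal (\<Prod>j\<in>J. measure ?N (I j))"
    unfolding N.emeasure_eq_measure by (rule prod_ennreal) simp
  finally have "measure noise_space (prod_emb UNIV (\<lambda>_. ?N) J (Pi\<^sub>E J I)) = (\<Prod>j\<in>J. measure ?N (I j))"
    unfolding measure_def by (simp add: prod_nonneg)
  moreover have "0 < measure ?N (I j)" for j
    using emeasure_std_normal_interval_pos[of "c j - \<delta>" "c j + \<delta>"] \<open>\<delta> > 0\<close>
    by (simp add: I_def N.emeasure_eq_measure)
  ultimately show ?thesis
    unfolding cyl by (simp add: prod_pos)
qed

section \<open>Reachable subspaces\<close>

definition reach_space :: "real^'n^'n \<Rightarrow> real^'l^'n \<Rightarrow> nat \<Rightarrow> (real^'n) set" where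
  "reach_space A G t = {(\<Sum>k<t. mat_pow A k *v (G *v w k)) | w. True}"

lemma reach_im_eq_reach_space: "reach_im A G = reach_space A G CARD('n)"
  for A :: "real^'n^'n"
  unfolding reach_im_def reach_space_def by simp

lemma mat_pow_Suc_mult_vec: "mat_pow A (Suc k) *v x = A *v (mat_pow A k *v x)"
  by (simp add: matrix_vector_mul_assoc)

lemma mult_vec_sum: "(A::real^'a^'b) *v sum f S = (\<Sum>i\<in>S. A *v f i)"
  by (induction S rule: infinite_finite_induct) (simp_all add: matrix_vector_right_distrib)

lemma subspace_reach_space: "subspace (reach_space A G t)"
  unfolding subspace_def reach_space_def
proof (intro conjI ballI allI)
  show "0 \<in> {\<Sum>k<t. mat_pow A k *v (G *v w k) |w. True}"
    by (rule CollectI, rule exI[of _ "\<lambda>_. 0"]) simp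
next
  fix x y assume "x \<in> {\<Sum>k<t. mat_pow A k *v (G *v w k) |w. True}"
    "y \<in> {\<Sum>k<t. mat_pow A k *v (G *v w k) |w. True}"
  then obtain w1 w2 where "x = (\<Sum>k<t. mat_pow A k *v (G *v w1 k))"
    "y = (\<Sum>k<t. mat_pow A k *v (G *v w2 k))" by auto
  then show "x + y \<in> {\<Sum>k<t. mat_pow A k *v (G *v w k) |w. True}"
    by (intro CollectI exI[of _ "\<lambda>k. w1 k + w2 k"])
      (simp add: matrix_vector_right_distrib sum.distrib)
next
  fix c :: real and x assume "x \<in> {\<Sum>k<t. mat_pow A k *v (G *v w k) |w. True}"
  then obtain w where "x = (\<Sum>k<t. mat_pow A k *v (G *v w k))" by auto
  then show "c *\<^sub>R x \<in> {\<Sum>k<t. mat_pow A k *v (G *v w k) |w. True}"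
    by (intro CollectI exI[of _ "\<lambda>k. c *\<^sub>R w k"])
      (simp add: matrix_vector_mult_scaleR scaleR_sum_right)
qed

lemma closed_reach_space: "closed (reach_space A G t)"
  by (rule closed_subspace[OF subspace_reach_space])

lemma reach_space_mono:
  assumes "t \<le> s" shows "reach_space A G t \<subseteq> reach_space A G s"
proof
  fix x assume "x \<in> reach_space A G t"
  then obtain w where x: "x = (\<Sum>k<t. mat_pow A k *v (G *v w k))"
    by (auto simp: reach_space_def)
  have "(\<Sum>k<s. mat_pow A k *v (G *v (if k < t then w k else 0)))
      = (\<Sum>k<t. mat_pow A k *v (G *v (if k < t then w k else 0)))"
    using assms by (intro sum.mono_neutral_right) auto
  then have "(\<Sum>k<s. mat_pow A k *v (G *v (if k < t then w k else 0))) = x"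
    unfolding x by simp
  then show "x \<in> reach_space A G s"
    unfolding reach_space_def by (intro CollectI exI[of _ "\<lambda>k. if k < t then w k else 0"]) simp
qed

lemma reach_space_Suc:
  "reach_space A G (Suc t) = {G *v w + A *v v | w v. v \<in> reach_space A G t}"
proof -
  have shift: "(\<Sum>k<Suc t. mat_pow A k *v (G *v w k))
      = G *v w 0 + A *v (\<Sum>k<t. mat_pow A k *v (G *v w (Suc k)))" for w
    by (subst sum.lessThan_Suc_shift)
      (simp add: mat_pow_Suc_mult_vec mult_vec_sum matrix_vector_mul_lid del: mat_pow.simps(2))
  show ?thesis
  proof (intro set_eqI iffI)
    fix x assume "x \<in> reach_space A G (Suc t)"
    then obtain w where "x = (\<Sum>k<Suc t. mat_pow A k *v (G *v w k))"
      by (auto simp: reach_space_def)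
    then have x: "x = G *v w 0 + A *v (\<Sum>k<t. mat_pow A k *v (G *v w (Suc k)))"
      unfolding shift .
    have "(\<Sum>k<t. mat_pow A k *v (G *v w (Suc k))) \<in> reach_space A G t"
      unfolding reach_space_def by (intro CollectI exI[of _ "\<lambda>k. w (Suc k)"]) simp
    then show "x \<in> {G *v w + A *v v | w v. v \<in> reach_space A G t}"
      unfolding x by blast
  next
    fix x assume "x \<in> {G *v w + A *v v | w v. v \<in> reach_space A G t}"
    then obtain w0 w where "x = G *v w0 + A *v (\<Sum>k<t. mat_pow A k *v (G *v w k))"
      by (auto simp: reach_space_def)
    then have "x = (\<Sum>k<Suc t. mat_pow A k *v (G *v (case k of 0 \<Rightarrow> w0 | Suc j \<Rightarrow> w j)))"
      unfolding shift by simp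
    then show "x \<in> reach_space A G (Suc t)"
      unfolding reach_space_def by blast
  qed
qed

lemma reach_space_stable:
  assumes "reach_space A G t = reach_space A G (Suc t)" and "t \<le> s"
  shows "reach_space A G s = reach_space A G t"
  using assms(2)
proof (induction s rule: dec_induct)
  case (step s)
  then have "reach_space A G (Suc s) = reach_space A G (Suc t)"
    by (simp only: reach_space_Suc)
  then show ?case using assms(1) by simp
qed simp

text \<open>A strictly increasing chain of subspaces of \<open>\<real>\<^sup>n\<close> fills the space after \<open>n\<close> steps,
  so the chain is constant from \<open>n\<close> on (the Cayley--Hamilton bound for reachability).\<close>
lemma reach_space_subset_reach_im: "reach_space A G s \<subseteq> reach_im A G"
  for A :: "real^'n^'n"
  unfolding reach_im_eq_reach_space
proof (cases "\<exists>t<CARD('n). reach_space A G t = reach_space A G (Suc t)")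
  case True
  then obtain t where t: "t < CARD('n)" "reach_space A G t = reach_space A G (Suc t)"
    by blast
  show "reach_space A G s \<subseteq> reach_space A G CARD('n)"
  proof (cases "s \<le> CARD('n)")
    case False
    then have "reach_space A G s = reach_space A G t"
      using t(1) by (intro reach_space_stable[OF t(2)]) simp
    also have "\<dots> \<subseteq> reach_space A G CARD('n)"
      using t(1) by (intro reach_space_mono) simp
    finally show ?thesis .
  qed (rule reach_space_mono)
next
  case False
  have "t \<le> CARD('n) \<Longrightarrow> t \<le> dim (reach_space A G t)" for t
  proof (induction t)
    case (Suc t)
    then have "reach_space A G t \<subset> reach_space A G (Suc t)"
      using False reach_space_mono[of t "Suc t" A G] by auto
    then have "dim (reach_space A G t) < dim (reach_space A G (Suc t))"
      by (intro dim_psubset) (simp add: span_eq_iff[THEN iffD2, OF subspace_reach_space])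
    then show ?case using Suc by simp
  qed simp
  then have "CARD('n) \<le> dim (reach_space A G CARD('n))"
    by simp
  then have "dim (reach_space A G CARD('n)) = DIM(real^'n)"
    using dim_subset_UNIV_cart[of "reach_space A G CARD('n)"] by simp
  then have "span (reach_space A G CARD('n)) = UNIV"
    using dim_eq_full[of "reach_space A G CARD('n)"] by simp
  then show "reach_space A G s \<subseteq> reach_space A G CARD('n)"
    by (simp add: span_eq_iff[THEN iffD2, OF subspace_reach_space])
qed

lemma reach_space_reversed:
  "reach_space A G t = {(\<Sum>\<tau><t. mat_pow A (t - 1 - \<tau>) *v (G *v w \<tau>)) | w. True}"
proof -
  have reindex: "(\<Sum>\<tau><t. mat_pow A (t - 1 - \<tau>) *v (G *v w \<tau>))
      = (\<Sum>k<t. mat_pow A k *v (G *v w (t - Suc k)))" for w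
    by (subst sum.nat_diff_reindex[symmetric]) (intro sum.cong refl, auto simp: Suc_diff_Suc)
  show ?thesis
  proof (intro set_eqI iffI)
    fix x assume "x \<in> reach_space A G t"
    then obtain w where x: "x = (\<Sum>k<t. mat_pow A k *v (G *v w k))"
      by (auto simp: reach_space_def)
    define w' where "w' = (\<lambda>j. w (t - Suc j))"
    have "x = (\<Sum>k<t. mat_pow A k *v (G *v w' (t - Suc k)))"
      unfolding x w'_def by (intro sum.cong refl) (simp add: Suc_diff_Suc)
    then show "x \<in> {(\<Sum>\<tau><t. mat_pow A (t - 1 - \<tau>) *v (G *v w \<tau>)) | w. True}"
      unfolding reindex by blast
  next
    fix x assume "x \<in> {(\<Sum>\<tau><t. mat_pow A (t - 1 - \<tau>) *v (G *v w \<tau>)) | w. True}"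
    then obtain w where "x = (\<Sum>k<t. mat_pow A k *v (G *v w (t - Suc k)))"
      unfolding reindex by blast
    then show "x \<in> reach_space A G t"
      unfolding reach_space_def by (intro CollectI exI[of _ "\<lambda>k. w (t - Suc k)"]) simp
  qed
qed

definition noiseless_x :: "real^'n^'n \<Rightarrow> real^'m^'n \<Rightarrow> real^'n \<Rightarrow> (nat \<Rightarrow> real^'m) \<Rightarrow> nat \<Rightarrow> real^'n" where
  "noiseless_x A B x u t = mat_pow A t *v x + (\<Sum>\<tau><t. mat_pow A (t - 1 - \<tau>) *v (B *v u \<tau>))"

lemma proc_x_eq_noiseless_plus_noise:
  "proc_x A B G mu x u t \<omega>
     = noiseless_x A B x u t + (\<Sum>\<tau><t. mat_pow A (t - 1 - \<tau>) *v (G *v proc_w mu \<tau> \<omega>))"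
  unfolding proc_x_def noiseless_x_def
  by (simp add: matrix_vector_right_distrib sum.distrib add.assoc)

lemma proc_x_in_reach_coset:
  "proc_x A B G mu x u t \<omega> \<in> (\<lambda>v. noiseless_x A B x u t + v) ` reach_space A G t"
proof -
  have "(\<Sum>\<tau><t. mat_pow A (t - 1 - \<tau>) *v (G *v proc_w mu \<tau> \<omega>)) \<in> reach_space A G t"
    unfolding reach_space_reversed by (intro CollectI exI[of _ "\<lambda>\<tau>. proc_w mu \<tau> \<omega>"]) simp
  then show ?thesis
    unfolding proc_x_eq_noiseless_plus_noise by blast
qed

lemma proc_x_diff:
  "proc_x A B G mu x1 u t \<omega> - proc_x A B G mu x2 u t \<omega> = mat_pow A t *v (x1 - x2)"
  unfolding proc_x_def by (simp add: matrix_vector_mult_diff_distrib)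

lemma mult_vec_proc_x_eq:
  assumes "mat_pow A t *v (x1 - x2) \<in> ker_mat M"
  shows "M *v proc_x A B G mu x1 u t \<omega> = M *v proc_x A B G mu x2 u t \<omega>"
proof -
  have "M *v (proc_x A B G mu x1 u t \<omega> - proc_x A B G mu x2 u t \<omega>) = 0"
    using assms by (simp add: proc_x_diff ker_mat_def)
  then show ?thesis
    by (simp add: matrix_vector_mult_diff_distrib)
qed

section \<open>The support of the state\<close>

lemma rv_supp_subset_closed:
  assumes "closed F" and "\<And>\<omega>. \<omega> \<in> space M \<Longrightarrow> X \<omega> \<in> F"
  shows "rv_supp M X \<subseteq> F"
proof
  fix z assume z: "z \<in> rv_supp M X"
  show "z \<in> F"
  proof (rule ccontr)
    assume "z \<notin> F"
    moreover have "open (- F)"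
      using \<open>closed F\<close> by auto
    ultimately obtain \<rho> where "\<rho> > 0" "ball z \<rho> \<subseteq> - F"
      using open_contains_ball by blast
    then have empty: "{\<omega> \<in> space M. X \<omega> \<in> ball z \<rho>} = {}"
      using assms(2) by blast
    have "0 < measure M {\<omega> \<in> space M. X \<omega> \<in> ball z \<rho>}"
      using z \<open>\<rho> > 0\<close> unfolding rv_supp_def by (simp del: mem_ball)
    then show False
      unfolding empty by simp
  qed
qed

lemma rv_supp_open_measure_pos:
  assumes "finite_measure M" and "X \<in> borel_measurable M"
    and "z \<in> rv_supp M X" and "open U" and "z \<in> U"
  shows "0 < measure M {\<omega> \<in> space M. X \<omega> \<in> U}"
proof -
  obtain \<rho> where "\<rho> > 0" "ball z \<rho> \<subseteq> U"
    using assms(4,5) open_contains_ball by blast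
  then have "measure M {\<omega> \<in> space M. X \<omega> \<in> ball z \<rho>} \<le> measure M {\<omega> \<in> space M. X \<omega> \<in> U}"
    using assms(2,4) by (intro finite_measure.finite_measure_mono[OF assms(1)] borel_mem_sets) auto
  moreover have "0 < measure M {\<omega> \<in> space M. X \<omega> \<in> ball z \<rho>}"
    using assms(3) \<open>\<rho> > 0\<close> unfolding rv_supp_def by (simp del: mem_ball)
  ultimately show ?thesis by simp
qed

lemma rv_supp_subset_if_measure_one:
  assumes "prob_space M" and "X \<in> borel_measurable M" and "closed F"
    and "measure M {\<omega> \<in> space M. X \<omega> \<in> F} = 1"
  shows "rv_supp M X \<subseteq> F"
proof
  interpret P: prob_space M by fact
  fix z assume "z \<in> rv_supp M X"
  show "z \<in> F"
  proof (rule ccontr)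
    assume "z \<notin> F"
    then have "0 < measure M {\<omega> \<in> space M. X \<omega> \<in> - F}"
      using assms(2,3) \<open>z \<in> rv_supp M X\<close>
      by (intro rv_supp_open_measure_pos P.finite_measure_axioms) auto
    moreover have "{\<omega> \<in> space M. X \<omega> \<in> - F} = space M - {\<omega> \<in> space M. X \<omega> \<in> F}"
      by auto
    then have "measure M {\<omega> \<in> space M. X \<omega> \<in> - F} = 1 - measure M {\<omega> \<in> space M. X \<omega> \<in> F}"
      using assms(2,3) by (simp add: P.prob_compl borel_mem_sets borel_closed)
    ultimately show False
      using assms(4) by simp
  qed
qed

text \<open>The half-spaces \<open>v \<bullet> z \<ge> v \<bullet> m\<close> and \<open>v \<bullet> z \<ge> v \<bullet> m + v \<bullet> v\<close> differ by the open slab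
  between them, which contains the support point \<open>m + v/2\<close> when \<open>v \<noteq> 0\<close>.\<close>
lemma shifted_halfspaces_measure_eq_imp_zero:
  assumes "finite_measure M" and "X \<in> borel_measurable M"
    and "m + (1/2) *\<^sub>R v \<in> rv_supp M X"
    and "measure M {\<omega> \<in> space M. v \<bullet> m + v \<bullet> v \<le> v \<bullet> X \<omega>}
       = measure M {\<omega> \<in> space M. v \<bullet> m \<le> v \<bullet> X \<omega>}"
  shows "v = 0"
proof (rule ccontr)
  interpret finite_measure M by fact
  assume "v \<noteq> 0"
  define H where "H = {z. v \<bullet> m \<le> v \<bullet> z}"
  define H' where "H' = {z. v \<bullet> m + v \<bullet> v \<le> v \<bullet> z}"
  define U where "U = {z. v \<bullet> m < v \<bullet> z} \<inter> {z. v \<bullet> z < v \<bullet> m + v \<bullet> v}"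
  define E where "E S = {\<omega> \<in> space M. X \<omega> \<in> S}" for S
  have borel: "H \<in> sets borel" "H' \<in> sets borel" "U \<in> sets borel"
    unfolding H_def H'_def U_def
    by (intro borel_closed borel_open closed_halfspace_ge open_Int open_halfspace_lt
        open_halfspace_gt)+
  have E_sets: "E S \<in> sets M" if "S \<in> sets borel" for S
    unfolding E_def using assms(2) that by (rule borel_mem_sets)
  have "0 < measure M (E U)"
    unfolding E_def
  proof (rule rv_supp_open_measure_pos[OF assms(1,2,3)])
    show "open U"
      unfolding U_def by (intro open_Int open_halfspace_lt open_halfspace_gt)
    show "m + (1/2) *\<^sub>R v \<in> U"
      using \<open>v \<noteq> 0\<close> by (simp add: U_def inner_add_right)
  qed
  also have "measure M (E U) = measure M (E H' \<union> E U) - measure M (E H')"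
  proof -
    have "E H' \<inter> E U = {}"
      using \<open>v \<noteq> 0\<close> by (auto simp: E_def H'_def U_def)
    then show ?thesis
      using borel by (simp add: finite_measure_Union E_sets)
  qed
  also have "\<dots> \<le> measure M (E H) - measure M (E H')"
  proof (intro diff_right_mono finite_measure_mono E_sets borel)
    have "H' \<subseteq> H"
    proof
      fix z assume "z \<in> H'"
      then have "v \<bullet> m + v \<bullet> v \<le> v \<bullet> z"
        by (simp add: H'_def)
      then have "v \<bullet> m \<le> v \<bullet> z"
        using inner_ge_zero[of v] by linarith
      then show "z \<in> H"
        by (simp add: H_def)
    qed
    moreover have "U \<subseteq> H"
      by (auto simp: U_def H_def)
    ultimately show "E H' \<union> E U \<subseteq> E H"
      unfolding E_def by blast
  qed
  finally show False
    using assms(4) by (simp add: E_def H_def H'_def)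
qed

lemma sum_mult_vec_small:
  fixes M :: "nat \<Rightarrow> real^'l^'n"
  assumes "\<rho> > 0"
  obtains \<delta> where "\<delta> > 0"
    and "\<And>w. (\<And>\<tau> i. \<tau> < t \<Longrightarrow> \<bar>w \<tau> $ i\<bar> < \<delta>) \<Longrightarrow> norm (\<Sum>\<tau><t. M \<tau> *v w \<tau>) < \<rho>"
proof -
  have "\<exists>K>0. \<forall>v. norm (M \<tau> *v v) \<le> norm v * K" for \<tau>
    using bounded_linear.pos_bounded[of "(*v) (M \<tau>)"] by simp
  then obtain K where K: "\<And>\<tau>. K \<tau> > 0" "\<And>\<tau> v. norm (M \<tau> *v v) \<le> norm v * K \<tau>"
    by metis
  define S where "S = (\<Sum>\<tau><t. K \<tau>) * real CARD('l)"
  have "S \<ge> 0" unfolding S_def using K(1) by (simp add: sum_nonneg less_imp_le)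
  define \<delta> where "\<delta> = \<rho> / (S + 1)"
  have "\<delta> > 0" "S * \<delta> < \<rho>"
    unfolding \<delta>_def using \<open>\<rho> > 0\<close> \<open>S \<ge> 0\<close> by (simp_all add: field_simps)
  moreover have "norm (\<Sum>\<tau><t. M \<tau> *v w \<tau>) \<le> S * \<delta>" if small: "\<And>\<tau> i. \<tau> < t \<Longrightarrow> \<bar>w \<tau> $ i\<bar> < \<delta>" for w
  proof -
    have "norm (w \<tau>) \<le> real CARD('l) * \<delta>" if "\<tau> < t" for \<tau>
    proof -
      have "norm (w \<tau>) \<le> (\<Sum>i\<in>UNIV. \<bar>w \<tau> $ i\<bar>)" by (rule norm_le_l1_cart)
      also have "\<dots> \<le> (\<Sum>i\<in>(UNIV::'l set). \<delta>)"
        using small[OF that] by (intro sum_mono less_imp_le)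
      finally show ?thesis by simp
    qed
    then have *: "norm (M \<tau> *v w \<tau>) \<le> real CARD('l) * \<delta> * K \<tau>" if "\<tau> < t" for \<tau>
      using K(2)[of \<tau> "w \<tau>"] mult_right_mono[OF _ less_imp_le[OF K(1)], of "norm (w \<tau>)"] that
      by (meson order_trans)
    have "norm (\<Sum>\<tau><t. M \<tau> *v w \<tau>) \<le> (\<Sum>\<tau><t. norm (M \<tau> *v w \<tau>))"
      by (rule norm_sum)
    also have "\<dots> \<le> (\<Sum>\<tau><t. real CARD('l) * \<delta> * K \<tau>)"
      using * by (intro sum_mono) simp
    also have "\<dots> = S * \<delta>"
      unfolding S_def by (simp add: sum_distrib_left sum_distrib_right mult_ac)
    finally show ?thesis .
  qed
  ultimately show ?thesis using that by force
qed

text \<open>The noise paths in a small cylinder around one that produces \<open>z\<close> keep the state close to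
  \<open>z\<close>, and such a cylinder has positive Gaussian mass.\<close>
lemma reach_coset_subset_rv_supp:
  fixes mu :: "real^'l"
  shows "(\<lambda>v. noiseless_x A B x u t + v) ` reach_space A G t
     \<subseteq> rv_supp (noise_space :: (nat \<times> ('l + 'p) \<Rightarrow> real) measure) (proc_x A B G mu x u t)"
proof
  fix z assume "z \<in> (\<lambda>v. noiseless_x A B x u t + v) ` reach_space A G t"
  then obtain w where z: "z = noiseless_x A B x u t + (\<Sum>\<tau><t. mat_pow A (t - 1 - \<tau>) *v (G *v w \<tau>))"
    unfolding reach_space_reversed by blast
  let ?M = "noise_space :: (nat \<times> ('l + 'p) \<Rightarrow> real) measure"
  show "z \<in> rv_supp ?M (proc_x A B G mu x u t)"
    unfolding rv_supp_def
  proof (intro CollectI allI impI)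
    fix \<rho> :: real assume "\<rho> > 0"
    obtain \<delta> where "\<delta> > 0" and \<delta>: "\<And>w. (\<And>\<tau> i. \<tau> < t \<Longrightarrow> \<bar>w \<tau> $ i\<bar> < \<delta>) \<Longrightarrow>
        norm (\<Sum>\<tau><t. (mat_pow A (t - 1 - \<tau>) ** G) *v w \<tau>) < \<rho>"
      by (rule sum_mult_vec_small[OF \<open>\<rho> > 0\<close>, where M = "\<lambda>\<tau>. mat_pow A (t - 1 - \<tau>) ** G" and t = t]) blast
    define J :: "(nat \<times> ('l + 'p)) set" where "J = {..<t} \<times> range Inl"
    define c :: "nat \<times> ('l + 'p) \<Rightarrow> real"
      where "c = (\<lambda>(\<tau>, s). case s of Inl i \<Rightarrow> w \<tau> $ i - mu $ i | Inr _ \<Rightarrow> 0)"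
    have "{\<omega>. \<forall>j\<in>J. \<bar>\<omega> j - c j\<bar> < \<delta>}
        \<subseteq> {\<omega> \<in> space ?M. proc_x A B G mu x u t \<omega> \<in> ball z \<rho>}"
    proof (safe, unfold space_noise_space)
      fix \<omega> assume "\<forall>j\<in>J. \<bar>\<omega> j - c j\<bar> < \<delta>"
      then have "\<bar>\<omega> (\<tau>, Inl i) - (w \<tau> $ i - mu $ i)\<bar> < \<delta>" if "\<tau> < t" for \<tau> i
        using that by (auto simp: J_def c_def)
      then have "\<bar>(proc_w mu \<tau> \<omega> - w \<tau>) $ i\<bar> < \<delta>" if "\<tau> < t" for \<tau> i
        using that by (simp add: proc_w_def algebra_simps)
      then have "norm (\<Sum>\<tau><t. (mat_pow A (t - 1 - \<tau>) ** G) *v (proc_w mu \<tau> \<omega> - w \<tau>)) < \<rho>"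
        by (rule \<delta>)
      moreover have "proc_x A B G mu x u t \<omega> - z
          = (\<Sum>\<tau><t. (mat_pow A (t - 1 - \<tau>) ** G) *v (proc_w mu \<tau> \<omega> - w \<tau>))"
        unfolding z proc_x_eq_noiseless_plus_noise
        by (simp add: matrix_vector_mul_assoc matrix_vector_mult_diff_distrib sum_subtractf)
      ultimately show "proc_x A B G mu x u t \<omega> \<in> ball z \<rho>"
        by (metis dist_norm dist_commute mem_ball)
    qed (rule UNIV_I)
    then have "measure ?M {\<omega>. \<forall>j\<in>J. \<bar>\<omega> j - c j\<bar> < \<delta>}
        \<le> measure ?M {\<omega> \<in> space ?M. proc_x A B G mu x u t \<omega> \<in> ball z \<rho>}"
      by (intro finite_measure.finite_measure_mono[OF finite_measure_noise_space]
          borel_mem_sets borel_measurable_proc_x) simp_all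
    moreover have "0 < measure ?M {\<omega>. \<forall>j\<in>J. \<bar>\<omega> j - c j\<bar> < \<delta>}"
      using \<open>\<delta> > 0\<close> by (intro measure_noise_cylinder_pos) (simp add: J_def)
    ultimately show "0 < measure ?M {\<omega> \<in> space ?M. proc_x A B G mu x u t \<omega> \<in> ball z \<rho>}"
      by linarith
  qed
qed

lemma rv_supp_proc_x:
  "rv_supp noise_space (proc_x A B G mu x u t)
     = (\<lambda>v. noiseless_x A B x u t + v) ` reach_space A G t"
  by (rule antisym[OF rv_supp_subset_closed[OF closed_translation[OF closed_reach_space]
        proc_x_in_reach_coset] reach_coset_subset_rv_supp])

section \<open>The relation \<open>ker [R -R]\<close>\<close>

lemma rel_bis_iff: "(x1, x2) \<in> rel_bis R \<longleftrightarrow> x1 - x2 \<in> ker_mat R"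
  unfolding rel_bis_def ker_mat_def by (simp add: matrix_vector_mult_diff_distrib)

lemma converse_rel_bis: "converse (rel_bis R) = rel_bis R"
  unfolding rel_bis_def by auto

lemma rel_bis_Image_iff: "y \<in> rel_bis R `` S \<longleftrightarrow> (\<exists>x\<in>S. R *v x = R *v y)"
  unfolding rel_bis_def by auto

lemma subspace_rel_bis: "subspace (rel_bis R)"
  unfolding subspace_def rel_bis_def
  by (auto simp: matrix_vector_right_distrib matrix_vector_mult_scaleR algebra_simps zero_prod_def)

lemma coset_diff_mem:
  assumes "subspace V" and "x \<in> (\<lambda>v. m + v) ` V" and "y \<in> (\<lambda>v. m + v) ` V"
  shows "x - y \<in> V"
  using assms subspace_diff[OF assms(1)] by force

lemma coset_add_mem:
  assumes "subspace V" and "x \<in> (\<lambda>v. m + v) ` V" and "v \<in> V"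
  shows "x + v \<in> (\<lambda>v. m + v) ` V"
proof -
  obtain w where "w \<in> V" "x = m + w"
    using assms(2) by blast
  then show ?thesis
    using subspace_add[OF assms(1) \<open>w \<in> V\<close> assms(3)] by (auto simp: image_iff add.assoc)
qed

lemma rel_bis_Image_coset_iff:
  assumes "subspace V" and "V \<inter> ker_mat R = {0}"
    and "xa \<in> (\<lambda>v. m + v) ` V" and "R *v xa = R *v xb"
  shows "xb \<in> rel_bis R `` (X \<inter> (\<lambda>v. m + v) ` V) \<longleftrightarrow> xa \<in> X"
proof
  assume "xb \<in> rel_bis R `` (X \<inter> (\<lambda>v. m + v) ` V)"
  then obtain x where x: "x \<in> X" "x \<in> (\<lambda>v. m + v) ` V" "R *v x = R *v xb"
    unfolding rel_bis_Image_iff by blast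
  have "x - xa \<in> V"
    using coset_diff_mem[OF assms(1) x(2) assms(3)] .
  moreover have "x - xa \<in> ker_mat R"
    using x(3) assms(4) by (simp add: ker_mat_def matrix_vector_mult_diff_distrib)
  ultimately have "x - xa = 0"
    using assms(2) by blast
  then show "xa \<in> X" using x(1) by simp
next
  assume "xa \<in> X"
  then show "xb \<in> rel_bis R `` (X \<inter> (\<lambda>v. m + v) ` V)"
    using assms(3,4) unfolding rel_bis_Image_iff by blast
qed

lemma reach_space_inter_ker:
  assumes "ker_mat R \<inter> reach_im A G = {0}"
  shows "reach_space A G t \<inter> ker_mat R = {0}"
  using assms reach_space_subset_reach_im[of A G t] subspace_0[OF subspace_reach_space]
  by (auto simp: ker_mat_def)

lemma mat_pow_mult_vec_invariant:
  assumes "(\<lambda>x. A *v x) ` K \<subseteq> K" and "d \<in> K"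
  shows "mat_pow A t *v d \<in> K"
  using assms by (induction t) (auto simp: mat_pow_Suc_mult_vec simp del: mat_pow.simps(2))

lemma proc_x_in_rel_bis_Image_iff:
  fixes mu :: "real^'l"
  assumes "reach_space A G t \<inter> ker_mat R = {0}" and "d \<in> reach_space A G t"
    and "R *v (proc_x A B G mu x1 u t \<omega> - d) = R *v proc_x A B G mu x2 u t \<omega>"
  shows "proc_x A B G mu x2 u t \<omega> \<in> rel_bis R `` (X \<inter> rv_supp
            (noise_space :: (nat \<times> ('l + 'p) \<Rightarrow> real) measure) (proc_x A B G mu x1 u t))
    \<longleftrightarrow> proc_x A B G mu x1 u t \<omega> - d \<in> X"
proof -
  have "proc_x A B G mu x1 u t \<omega> + - d \<in> (\<lambda>v. noiseless_x A B x1 u t + v) ` reach_space A G t"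
    by (intro coset_add_mem subspace_reach_space proc_x_in_reach_coset subspace_neg assms(2))
  then show ?thesis
    unfolding rv_supp_proc_x
    by (intro rel_bis_Image_coset_iff[OF subspace_reach_space assms(1)]) (simp_all add: assms(3))
qed

section \<open>Sufficiency\<close>

context
  fixes A :: "real^'n^'n" and B :: "real^'m^'n" and G :: "real^'l^'n"
    and C :: "real^'n^'p" and mu :: "real^'l" and L :: "real^'p^'p"
    and R :: "real^'n^'r"
  assumes invariant: "(\<lambda>x. A *v x) ` ker_mat R \<subseteq> ker_mat R"
    and unobservable: "ker_mat R \<subseteq> ker_mat C"
    and unreachable: "ker_mat R \<inter> reach_im A G = {0}"
begin

lemma rel_bis_proc_x:
  assumes "(x1, x2) \<in> rel_bis R"
  shows "R *v proc_x A B G mu x1 u t \<omega> = R *v proc_x A B G mu x2 u t \<omega>"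
proof -
  have "mat_pow A t *v (x1 - x2) \<in> ker_mat R"
    using assms by (intro mat_pow_mult_vec_invariant[OF invariant]) (simp add: rel_bis_iff)
  then show ?thesis
    by (rule mult_vec_proc_x_eq)
qed

lemma proc_y_eq_if_rel_bis:
  assumes "(x1, x2) \<in> rel_bis R"
  shows "proc_y A B G C mu L x1 u = proc_y A B G C mu L x2 u"
proof (intro ext)
  fix t \<omega>
  have "mat_pow A t *v (x1 - x2) \<in> ker_mat C"
    using assms unobservable
    by (auto intro: mat_pow_mult_vec_invariant[OF invariant] simp: rel_bis_iff)
  then show "proc_y A B G C mu L x1 u t \<omega> = proc_y A B G C mu L x2 u t \<omega>"
    unfolding proc_y_def by (simp add: mult_vec_proc_x_eq)
qed

lemma proc_x_rel_bis_event_eq: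
  assumes "(x1, x2) \<in> rel_bis R"
  defines "M \<equiv> noise_space :: (nat \<times> ('l + 'p) \<Rightarrow> real) measure"
  shows "{\<omega> \<in> space M. proc_x A B G mu x2 u t \<omega>
            \<in> rel_bis R `` (X \<inter> rv_supp M (proc_x A B G mu x1 u t))}
       = {\<omega> \<in> space M. proc_x A B G mu x1 u t \<omega> \<in> X}"
proof -
  have "proc_x A B G mu x2 u t \<omega> \<in> rel_bis R `` (X \<inter> rv_supp M (proc_x A B G mu x1 u t))
      \<longleftrightarrow> proc_x A B G mu x1 u t \<omega> - 0 \<in> X" for \<omega> :: "nat \<times> ('l + 'p) \<Rightarrow> real"
    unfolding M_def
    by (rule proc_x_in_rel_bis_Image_iff[OF reach_space_inter_ker[OF unreachable]
          subspace_0[OF subspace_reach_space]]) (simp add: rel_bis_proc_x[OF assms(1)])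
  then show ?thesis
    by simp
qed

lemma stoch_bisim_rel_bis: "stoch_bisim A B G C mu L (rel_bis R)"
  unfolding stoch_bisim_def Let_def
proof (intro conjI subspace_rel_bis allI impI ballI)
  fix x1 x2 u t assume rel: "(x1, x2) \<in> rel_bis R"
  let ?M = "noise_space :: (nat \<times> ('l + 'p) \<Rightarrow> real) measure"
  fix X1 show "measure ?M {\<omega> \<in> space ?M. proc_x A B G mu x1 u t \<omega> \<in> X1}
      = measure ?M {\<omega> \<in> space ?M. proc_x A B G mu x2 u t \<omega>
          \<in> rel_bis R `` (X1 \<inter> rv_supp ?M (proc_x A B G mu x1 u t))}"
    by (simp only: proc_x_rel_bis_event_eq[OF rel])
next
  fix x1 x2 u t assume rel: "(x1, x2) \<in> rel_bis R"
  then have rel': "(x2, x1) \<in> rel_bis R"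
    using converse_rel_bis by blast
  let ?M = "noise_space :: (nat \<times> ('l + 'p) \<Rightarrow> real) measure"
  fix X2 show "measure ?M {\<omega> \<in> space ?M. proc_x A B G mu x2 u t \<omega> \<in> X2}
      = measure ?M {\<omega> \<in> space ?M. proc_x A B G mu x1 u t \<omega>
          \<in> converse (rel_bis R) `` (X2 \<inter> rv_supp ?M (proc_x A B G mu x2 u t))}"
    by (simp only: converse_rel_bis proc_x_rel_bis_event_eq[OF rel'])
next
  fix x1 x2 u assume "(x1, x2) \<in> rel_bis R"
  then show "stoch_equiv noise_space (proc_y A B G C mu L x1 u) (proc_y A B G C mu L x2 u)"
    by (simp add: proc_y_eq_if_rel_bis stoch_equiv_def)
qed

end

section \<open>Necessity\<close>

lemma stoch_bisim_measure_eq: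
  fixes A :: "real^'n^'n" and B :: "real^'m^'n" and G :: "real^'l^'n"
    and C :: "real^'n^'p" and mu :: "real^'l" and L :: "real^'p^'p"
  assumes "stoch_bisim A B G C mu L (rel_bis R)" and "(x1, x2) \<in> rel_bis R"
    and "X \<in> sets borel"
  defines "M \<equiv> noise_space :: (nat \<times> ('l + 'p) \<Rightarrow> real) measure"
  shows "measure M {\<omega> \<in> space M. proc_x A B G mu x1 u t \<omega> \<in> X}
       = measure M {\<omega> \<in> space M. proc_x A B G mu x2 u t \<omega>
           \<in> rel_bis R `` (X \<inter> rv_supp M (proc_x A B G mu x1 u t))}"
proof -
  have "X \<subseteq> Domain (rel_bis R)"
    by (auto simp: rel_bis_def)
  then show ?thesis
    using assms(1-3) unfolding stoch_bisim_def Let_def M_def by blast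
qed

lemma proc_y_time_zero: "proc_y A B G C mu L x u 0 \<omega> = C *v x + proc_nu L 0 \<omega>"
  unfolding proc_y_def proc_x_def by simp

lemma integrable_proc_nu_component: "integrable noise_space (\<lambda>\<omega>. proc_nu L t \<omega> $ j)"
  unfolding proc_nu_def matrix_vector_mult_def by (simp add: integrable_noise_component)

text \<open>The means of \<open>y(0)\<close> for the related initial states \<open>k\<close> and \<open>0\<close> differ by \<open>C k\<close>.\<close>
lemma stoch_bisim_ker_subset_ker_C:
  fixes A :: "real^'n^'n" and B :: "real^'m^'n" and G :: "real^'l^'n"
    and C :: "real^'n^'p" and mu :: "real^'l" and L :: "real^'p^'p"
  assumes bis: "stoch_bisim A B G C mu L (rel_bis R)"
  shows "ker_mat R \<subseteq> ker_mat C"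
proof
  let ?M = "noise_space :: (nat \<times> ('l + 'p) \<Rightarrow> real) measure"
  let ?P = "PiM {0::nat} (\<lambda>_. borel :: (real^'p) measure)"
  interpret P: prob_space ?M by (rule prob_space_noise_space)
  fix k assume "k \<in> ker_mat R"
  define u :: "nat \<Rightarrow> real^'m" where "u = (\<lambda>_. 0)"
  define Y where "Y x = (\<lambda>\<omega>. \<lambda>t\<in>{0}. proc_y A B G C mu L x u t \<omega>)" for x
  have "(k, 0) \<in> rel_bis R"
    using \<open>k \<in> ker_mat R\<close> by (simp add: rel_bis_iff)
  then have "stoch_equiv ?M (proc_y A B G C mu L k u) (proc_y A B G C mu L 0 u)"
    using bis unfolding stoch_bisim_def Let_def by blast
  then have distr_eq: "distr ?M ?P (Y k) = distr ?M ?P (Y 0)"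
    unfolding stoch_equiv_def Y_def by (elim allE[of _ "{0}"]) simp
  have Y_meas: "Y x \<in> measurable ?M ?P" for x
    unfolding Y_def by (intro measurable_restrict borel_measurable_proc_y)
  have coord_meas: "(\<lambda>\<phi>. \<phi> 0 $ j) \<in> borel_measurable ?P" for j
    by (rule measurable_compose[OF measurable_component_singleton]) simp_all
  have mean: "(\<integral>\<phi>. \<phi> 0 $ j \<partial>distr ?M ?P (Y x)) = (C *v x) $ j + (\<integral>\<omega>. proc_nu L 0 \<omega> $ j \<partial>?M)"
    for x j
    unfolding integral_distr[OF Y_meas coord_meas]
    by (simp add: Y_def proc_y_time_zero integrable_proc_nu_component P.prob_space)
  have "(C *v k) $ j = 0" for j
    using mean[of k j] mean[of 0 j] distr_eq by simp
  then show "k \<in> ker_mat C"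
    by (simp add: ker_mat_def vec_eq_iff)
qed

lemma coset_in_rel_bis_Image_hyperplane:
  assumes "subspace V" and "k \<in> V" and "k \<in> ker_mat R" and "k \<noteq> 0"
    and "x \<in> (\<lambda>v. m + v) ` V"
  shows "x \<in> rel_bis R `` ({z. k \<bullet> z = k \<bullet> m} \<inter> (\<lambda>v. m + v) ` V)"
proof -
  define y where "y = x + (- (k \<bullet> (x - m)) / (k \<bullet> k)) *\<^sub>R k"
  have "y \<in> (\<lambda>v. m + v) ` V"
    unfolding y_def by (intro coset_add_mem assms(1,5) subspace_scale assms(2))
  moreover have "k \<bullet> y = k \<bullet> m"
    using \<open>k \<noteq> 0\<close> by (simp add: y_def inner_diff_right inner_add_right)
  moreover have "R *v y = R *v x"
    using \<open>k \<in> ker_mat R\<close>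
    by (simp add: y_def ker_mat_def matrix_vector_right_distrib matrix_vector_mult_diff_distrib
        matrix_vector_mult_scaleR)
  ultimately show ?thesis
    unfolding rel_bis_Image_iff by blast
qed

text \<open>For a nonzero \<open>k \<in> ker R\<close> reachable in \<open>n\<close> steps, the relational image of the hyperplane
  through the noiseless state orthogonal to \<open>k\<close> is the whole support, whereas the state
  leaves that hyperplane with positive probability.\<close>
lemma stoch_bisim_ker_inter_reach:
  fixes A :: "real^'n^'n" and B :: "real^'m^'n" and G :: "real^'l^'n"
    and C :: "real^'n^'p" and mu :: "real^'l" and L :: "real^'p^'p"
  assumes bis: "stoch_bisim A B G C mu L (rel_bis R)"
  shows "ker_mat R \<inter> reach_im A G = {0}"
proof -
  let ?M = "noise_space :: (nat \<times> ('l + 'p) \<Rightarrow> real) measure"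
  interpret P: prob_space ?M by (rule prob_space_noise_space)
  have "k = 0" if "k \<in> ker_mat R" and "k \<in> reach_im A G" for k
  proof (rule ccontr)
    assume "k \<noteq> 0"
    define u :: "nat \<Rightarrow> real^'m" where "u = (\<lambda>_. 0)"
    define V where "V = reach_space A G CARD('n)"
    define m where "m = noiseless_x A B 0 u CARD('n)"
    define X :: "(nat \<times> ('l + 'p) \<Rightarrow> real) \<Rightarrow> real^'n"
      where "X = proc_x A B G mu 0 u CARD('n)"
    define H where "H = {z. k \<bullet> z = k \<bullet> m}"
    have "k \<in> V" and "subspace V"
      using that(2) subspace_reach_space unfolding V_def reach_im_eq_reach_space by auto
    have supp: "rv_supp ?M X = (\<lambda>v. m + v) ` V"
      unfolding X_def m_def V_def by (rule rv_supp_proc_x)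
    have "X \<omega> \<in> rel_bis R `` (H \<inter> rv_supp ?M X)" for \<omega>
    proof -
      have "X \<omega> \<in> (\<lambda>v. m + v) ` V"
        unfolding X_def m_def V_def by (rule proc_x_in_reach_coset)
      then show ?thesis
        unfolding H_def supp
        by (rule coset_in_rel_bis_Image_hyperplane[OF \<open>subspace V\<close> \<open>k \<in> V\<close> that(1) \<open>k \<noteq> 0\<close>])
    qed
    then have "measure ?M {\<omega> \<in> space ?M. X \<omega> \<in> H} = 1"
      using stoch_bisim_measure_eq[OF bis, of 0 0 H] P.prob_space
      by (simp add: X_def H_def rel_bis_def closed_hyperplane)
    then have "rv_supp ?M X \<subseteq> H"
      unfolding H_def X_def
      by (intro rv_supp_subset_if_measure_one P.prob_space_axioms borel_measurable_proc_x
          closed_hyperplane)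
    moreover have "m + k \<in> rv_supp ?M X"
      unfolding supp using \<open>k \<in> V\<close> by blast
    ultimately show False
      using \<open>k \<noteq> 0\<close> by (auto simp: H_def inner_add_right)
  qed
  then show ?thesis
    using subspace_0[OF subspace_reach_space] by (auto simp: ker_mat_def reach_im_eq_reach_space)
qed

text \<open>Condition (i) for the whole space, applied to the related states \<open>k\<close> and \<open>0\<close>, makes the
  state reached from \<open>0\<close> in one step \<open>R\<close>-equivalent to a point of the support of the state
  reached from \<open>k\<close>; the two supports differ by the translation \<open>A k\<close>.\<close>
lemma stoch_bisim_shift_decomp:
  fixes A :: "real^'n^'n" and B :: "real^'m^'n" and G :: "real^'l^'n"
    and C :: "real^'n^'p" and mu :: "real^'l" and L :: "real^'p^'p"
  assumes bis: "stoch_bisim A B G C mu L (rel_bis R)" and "k \<in> ker_mat R"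
  obtains v \<kappa> where "v \<in> reach_space A G 1" and "\<kappa> \<in> ker_mat R" and "A *v k = v + \<kappa>"
proof -
  let ?M = "noise_space :: (nat \<times> ('l + 'p) \<Rightarrow> real) measure"
  interpret P: prob_space ?M by (rule prob_space_noise_space)
  define u :: "nat \<Rightarrow> real^'m" where "u = (\<lambda>_. 0)"
  define X1 :: "(nat \<times> ('l + 'p) \<Rightarrow> real) \<Rightarrow> real^'n" where "X1 = proc_x A B G mu k u 1"
  define X2 :: "(nat \<times> ('l + 'p) \<Rightarrow> real) \<Rightarrow> real^'n" where "X2 = proc_x A B G mu 0 u 1"
  have "(k, 0) \<in> rel_bis R"
    using \<open>k \<in> ker_mat R\<close> by (simp add: rel_bis_iff)
  then have "measure ?M {\<omega> \<in> space ?M. X2 \<omega> \<in> rel_bis R `` (UNIV \<inter> rv_supp ?M X1)} = 1"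
    using stoch_bisim_measure_eq[OF bis, of k 0 UNIV] P.prob_space by (simp add: X1_def X2_def)
  then obtain \<omega> where "X2 \<omega> \<in> rel_bis R `` rv_supp ?M X1"
    by (metis (no_types, lifting) Collect_empty_eq inf_top.left_neutral measure_empty zero_neq_one)
  then obtain y where y: "y \<in> rv_supp ?M X1" and Ry: "R *v y = R *v X2 \<omega>"
    unfolding rel_bis_Image_iff by blast
  have "X1 \<omega> - y \<in> reach_space A G 1"
    using y unfolding X1_def rv_supp_proc_x
    by (intro coset_diff_mem[OF subspace_reach_space proc_x_in_reach_coset])
  moreover have "y - X2 \<omega> \<in> ker_mat R"
    using Ry by (simp add: ker_mat_def matrix_vector_mult_diff_distrib)
  moreover have "A *v k = (X1 \<omega> - y) + (y - X2 \<omega>)"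
    using proc_x_diff[of A B G mu k u 1 \<omega> 0] by (simp add: X1_def X2_def)
  ultimately show ?thesis
    using that by blast
qed

text \<open>With \<open>A k = v + \<kappa>\<close> as above, condition (i) for a half-space orthogonal to \<open>v\<close> says that the
  law of the state reached from \<open>k\<close> gives the half-space and its translate by \<open>v\<close> the same mass.\<close>
lemma stoch_bisim_A_invariant:
  fixes A :: "real^'n^'n" and B :: "real^'m^'n" and G :: "real^'l^'n"
    and C :: "real^'n^'p" and mu :: "real^'l" and L :: "real^'p^'p"
  assumes bis: "stoch_bisim A B G C mu L (rel_bis R)"
  shows "(\<lambda>x. A *v x) ` ker_mat R \<subseteq> ker_mat R"
proof (intro image_subsetI)
  let ?M = "noise_space :: (nat \<times> ('l + 'p) \<Rightarrow> real) measure"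
  interpret P: prob_space ?M by (rule prob_space_noise_space)
  fix k assume "k \<in> ker_mat R"
  then obtain v \<kappa> where "v \<in> reach_space A G 1" "\<kappa> \<in> ker_mat R" and Ak: "A *v k = v + \<kappa>"
    using stoch_bisim_shift_decomp[OF bis] by blast
  define u :: "nat \<Rightarrow> real^'m" where "u = (\<lambda>_. 0)"
  define m where "m = noiseless_x A B k u 1"
  define X1 :: "(nat \<times> ('l + 'p) \<Rightarrow> real) \<Rightarrow> real^'n" where "X1 = proc_x A B G mu k u 1"
  define H where "H = {z. v \<bullet> m \<le> v \<bullet> z}"
  have "proc_x A B G mu 0 u 1 \<omega> \<in> rel_bis R `` (H \<inter> rv_supp ?M X1)
      \<longleftrightarrow> v \<bullet> m + v \<bullet> v \<le> v \<bullet> X1 \<omega>" for \<omega>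
  proof -
    have "X1 \<omega> - v = proc_x A B G mu 0 u 1 \<omega> + \<kappa>"
      using proc_x_diff[of A B G mu k u 1 \<omega> 0] Ak by (simp add: X1_def algebra_simps)
    then have "R *v (X1 \<omega> - v) = R *v proc_x A B G mu 0 u 1 \<omega>"
      using \<open>\<kappa> \<in> ker_mat R\<close> by (simp add: ker_mat_def matrix_vector_right_distrib)
    then have "proc_x A B G mu 0 u 1 \<omega> \<in> rel_bis R `` (H \<inter> rv_supp ?M X1) \<longleftrightarrow> X1 \<omega> - v \<in> H"
      unfolding X1_def
      by (intro proc_x_in_rel_bis_Image_iff
          reach_space_inter_ker[OF stoch_bisim_ker_inter_reach[OF bis]] \<open>v \<in> reach_space A G 1\<close>)
    then show ?thesis
      by (simp add: H_def inner_diff_right le_diff_eq)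
  qed
  moreover have "measure ?M {\<omega> \<in> space ?M. X1 \<omega> \<in> H}
      = measure ?M {\<omega> \<in> space ?M. proc_x A B G mu 0 u 1 \<omega> \<in> rel_bis R `` (H \<inter> rv_supp ?M X1)}"
    using \<open>k \<in> ker_mat R\<close> unfolding X1_def H_def
    by (intro stoch_bisim_measure_eq[OF bis] borel_closed[OF closed_halfspace_ge])
      (simp add: rel_bis_iff)
  ultimately have "measure ?M {\<omega> \<in> space ?M. v \<bullet> m + v \<bullet> v \<le> v \<bullet> X1 \<omega>}
      = measure ?M {\<omega> \<in> space ?M. v \<bullet> m \<le> v \<bullet> X1 \<omega>}"
    by (simp add: H_def)
  moreover have "m + (1/2) *\<^sub>R v \<in> rv_supp ?M X1"
    unfolding X1_def m_def rv_supp_proc_x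
    using subspace_scale[OF subspace_reach_space \<open>v \<in> reach_space A G 1\<close>] by blast
  ultimately have "v = 0"
    unfolding X1_def
    by (intro shifted_halfspaces_measure_eq_imp_zero[OF P.finite_measure_axioms
          borel_measurable_proc_x])
  then show "A *v k \<in> ker_mat R"
    using Ak \<open>\<kappa> \<in> ker_mat R\<close> by simp
qed

theorem proposition6:
  fixes A :: "real^'n^'n" and B :: "real^'m^'n" and G :: "real^'l^'n"
    and C :: "real^'n^'p" and mu :: "real^'l" and L :: "real^'p^'p"
    and R :: "real^'n^'r"
  assumes "Domain (rel_bis R) = UNIV" and "Range (rel_bis R) = UNIV"
  shows "stoch_bisim A B G C mu L (rel_bis R) \<longleftrightarrow>
    ((\<lambda>x. A *v x) ` ker_mat R \<subseteq> ker_mat R \<and> ker_mat R \<subseteq> ker_mat C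
     \<and> ker_mat R \<inter> reach_im A G = {0})"
proof
  assume "stoch_bisim A B G C mu L (rel_bis R)"
  then show "(\<lambda>x. A *v x) ` ker_mat R \<subseteq> ker_mat R \<and> ker_mat R \<subseteq> ker_mat C
      \<and> ker_mat R \<inter> reach_im A G = {0}"
    by (intro conjI stoch_bisim_A_invariant stoch_bisim_ker_subset_ker_C stoch_bisim_ker_inter_reach)
next
  assume "(\<lambda>x. A *v x) ` ker_mat R \<subseteq> ker_mat R \<and> ker_mat R \<subseteq> ker_mat C
      \<and> ker_mat R \<inter> reach_im A G = {0}"
  then show "stoch_bisim A B G C mu L (rel_bis R)"
    by (elim conjE) (rule stoch_bisim_rel_bis)
qed

end
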